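(* Let $(G,\cdot)$ be a group and $\psi\in\operatorname{End}(G,\cdot)$ with $\psi([[G,\psi],G])\le Z(G,\cdot)$. Then each of the following maps $G\times G\to G\times G$ defines a set-theoretic non-degenerate solution $(G,r)$ of the Yang--Baxter equation: $$r_1(g,h)=\big(\psi(g)^{-1}h\,\psi(g),\ \psi(g^{-1}h)\,h^{-1}\psi(g)\,g\,\psi(g)^{-1}h\,\psi(h^{-1}g)\big);$$ $$r_2(g,h)=\big(g\,\psi(g)^{-1}h\,\psi(g)\,g^{-1},\ \psi(h)\,g\,\psi(h)^{-1}\big);$$ $$r_3(g,h)=\big(\psi(g)\,h\,\psi(g)^{-1},\ \psi(g)\,h^{-1}\psi(g)^{-1}g\,h\big);$$ $$r_4(g,h)=\big(g\,h\,\psi(h)^{-1}g^{-1}\psi(h),\ \psi(h)^{-1}g\,\psi(h)\big).$$ Moreover $r_1$ and $r_2$ are mutually inverse and they coincide if and only if $(G,\cdot)$ is abelian; $r_3$ and $r_4$ are mutually inverse and they coincide if and only if $g\,\psi(g)^{-1}h\,\psi(g)=h\,\psi(h)^{-1}g\,\psi(h)$ for all $g,h\in G$.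
   Context: All products are in $(G,\cdot)$. For $\psi\in\operatorname{End}(G,\cdot)$, $[g,\psi]=g\cdot\psi(g)^{-1}$ and $[G,\psi]$ is the subgroup generated by these elements; $[x,y]=xyx^{-1}y^{-1}$ and $[A,B]$ is the subgroup generated by $[a,b]$, $a\in A,b\in B$; $Z(G,\cdot)$ is the centre. A set-theoretic solution of the Yang--Baxter equation is a pair $(X,r)$ with $X\neq\emptyset$ and $r\colon X\times X\to X\times X$, $r(x,y)=(\sigma_x(y),\tau_y(x))$, a bijection satisfying $(r\times\mathrm{id}_X)(\mathrm{id}_X\times r)(r\times\mathrm{id}_X)=(\mathrm{id}_X\times r)(r\times\mathrm{id}_X)(\mathrm{id}_X\times r)$; it is non-degenerate if all $\sigma_x$ and $\tau_x$ are bijective. *)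

theory Defs
  imports "HOL-Algebra.Algebra"
begin

definition group_center :: "('a, 'b) monoid_scheme \<Rightarrow> 'a set" where
  "group_center G = {z \<in> carrier G. \<forall>x \<in> carrier G. z \<otimes>\<^bsub>G\<^esub> x = x \<otimes>\<^bsub>G\<^esub> z}"

definition comm :: "('a, 'b) monoid_scheme \<Rightarrow> 'a \<Rightarrow> 'a \<Rightarrow> 'a" where
  "comm G x y = x \<otimes>\<^bsub>G\<^esub> y \<otimes>\<^bsub>G\<^esub> inv\<^bsub>G\<^esub> x \<otimes>\<^bsub>G\<^esub> inv\<^bsub>G\<^esub> y"

definition comm_subgroup :: "('a, 'b) monoid_scheme \<Rightarrow> 'a set \<Rightarrow> 'a set \<Rightarrow> 'a set" where
  "comm_subgroup G A B = generate G {comm G a b | a b. a \<in> A \<and> b \<in> B}"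

definition endo_comm :: "('a, 'b) monoid_scheme \<Rightarrow> ('a \<Rightarrow> 'a) \<Rightarrow> 'a set" where
  "endo_comm G \<psi> = generate G {g \<otimes>\<^bsub>G\<^esub> inv\<^bsub>G\<^esub> (\<psi> g) | g. g \<in> carrier G}"

definition r12 :: "('a \<times> 'a \<Rightarrow> 'a \<times> 'a) \<Rightarrow> 'a \<times> 'a \<times> 'a \<Rightarrow> 'a \<times> 'a \<times> 'a" where
  "r12 r t = (case t of (x, y, z) \<Rightarrow> (fst (r (x, y)), snd (r (x, y)), z))"

definition r23 :: "('a \<times> 'a \<Rightarrow> 'a \<times> 'a) \<Rightarrow> 'a \<times> 'a \<times> 'a \<Rightarrow> 'a \<times> 'a \<times> 'a" where
  "r23 r t = (case t of (x, y, z) \<Rightarrow> (x, fst (r (y, z)), snd (r (y, z))))"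

definition is_YBE_solution :: "'a set \<Rightarrow> ('a \<times> 'a \<Rightarrow> 'a \<times> 'a) \<Rightarrow> bool" where
  "is_YBE_solution S r \<longleftrightarrow> S \<noteq> {} \<and> bij_betw r (Sigma S (\<lambda>_. S)) (Sigma S (\<lambda>_. S)) \<and>
     (\<forall>x\<in>S. \<forall>y\<in>S. \<forall>z\<in>S.
        r12 r (r23 r (r12 r (x, y, z))) = r23 r (r12 r (r23 r (x, y, z))))"

text \<open>sigma_x(y) = fst (r(x,y)), tau_y(x) = snd (r(x,y)).\<close>
definition nondegenerate :: "'a set \<Rightarrow> ('a \<times> 'a \<Rightarrow> 'a \<times> 'a) \<Rightarrow> bool" where
  "nondegenerate S r \<longleftrightarrow>
     (\<forall>x\<in>S. bij_betw (\<lambda>y. fst (r (x, y))) S S \<and> bij_betw (\<lambda>y. snd (r (y, x))) S S)"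

definition YBE_r1 :: "('a, 'b) monoid_scheme \<Rightarrow> ('a \<Rightarrow> 'a) \<Rightarrow> 'a \<times> 'a \<Rightarrow> 'a \<times> 'a" where
  "YBE_r1 G \<psi> p = (case p of (g, h) \<Rightarrow>
     (inv\<^bsub>G\<^esub> (\<psi> g) \<otimes>\<^bsub>G\<^esub> h \<otimes>\<^bsub>G\<^esub> \<psi> g,
      \<psi> (inv\<^bsub>G\<^esub> g \<otimes>\<^bsub>G\<^esub> h) \<otimes>\<^bsub>G\<^esub> inv\<^bsub>G\<^esub> h \<otimes>\<^bsub>G\<^esub> \<psi> g \<otimes>\<^bsub>G\<^esub> g
        \<otimes>\<^bsub>G\<^esub> inv\<^bsub>G\<^esub> (\<psi> g) \<otimes>\<^bsub>G\<^esub> h \<otimes>\<^bsub>G\<^esub> \<psi> (inv\<^bsub>G\<^esub> h \<otimes>\<^bsub>G\<^esub> g)))"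

definition YBE_r2 :: "('a, 'b) monoid_scheme \<Rightarrow> ('a \<Rightarrow> 'a) \<Rightarrow> 'a \<times> 'a \<Rightarrow> 'a \<times> 'a" where
  "YBE_r2 G \<psi> p = (case p of (g, h) \<Rightarrow>
     (g \<otimes>\<^bsub>G\<^esub> inv\<^bsub>G\<^esub> (\<psi> g) \<otimes>\<^bsub>G\<^esub> h \<otimes>\<^bsub>G\<^esub> \<psi> g \<otimes>\<^bsub>G\<^esub> inv\<^bsub>G\<^esub> g,
      \<psi> h \<otimes>\<^bsub>G\<^esub> g \<otimes>\<^bsub>G\<^esub> inv\<^bsub>G\<^esub> (\<psi> h)))"

definition YBE_r3 :: "('a, 'b) monoid_scheme \<Rightarrow> ('a \<Rightarrow> 'a) \<Rightarrow> 'a \<times> 'a \<Rightarrow> 'a \<times> 'a" where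
  "YBE_r3 G \<psi> p = (case p of (g, h) \<Rightarrow>
     (\<psi> g \<otimes>\<^bsub>G\<^esub> h \<otimes>\<^bsub>G\<^esub> inv\<^bsub>G\<^esub> (\<psi> g),
      \<psi> g \<otimes>\<^bsub>G\<^esub> inv\<^bsub>G\<^esub> h \<otimes>\<^bsub>G\<^esub> inv\<^bsub>G\<^esub> (\<psi> g) \<otimes>\<^bsub>G\<^esub> g \<otimes>\<^bsub>G\<^esub> h))"

definition YBE_r4 :: "('a, 'b) monoid_scheme \<Rightarrow> ('a \<Rightarrow> 'a) \<Rightarrow> 'a \<times> 'a \<Rightarrow> 'a \<times> 'a" where
  "YBE_r4 G \<psi> p = (case p of (g, h) \<Rightarrow>
     (g \<otimes>\<^bsub>G\<^esub> h \<otimes>\<^bsub>G\<^esub> inv\<^bsub>G\<^esub> (\<psi> h) \<otimes>\<^bsub>G\<^esub> inv\<^bsub>G\<^esub> g \<otimes>\<^bsub>G\<^esub> \<psi> h,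
      inv\<^bsub>G\<^esub> (\<psi> h) \<otimes>\<^bsub>G\<^esub> g \<otimes>\<^bsub>G\<^esub> \<psi> h))"

end

theory Submission
  imports Defs
begin

(* Write c_t for conjugation by t, and x ~ y when x y^-1 is central; c_t only depends on the
   class of t.  The hypothesis says that \<psi>(c_a k) ~ \<psi>(k) and \<psi>(c_k a) ~ \<psi>(a) for a in [G,\<psi>].
   Now r_2(x,y) = (c_{x \<psi>(x)^-1}(y), c_{\<psi>(y)}(x)) and r_3(x,y) = (c_{\<psi>(x)}(y), c_{\<psi>(x)}(y)^-1 x y),
   so the hypothesis yields \<psi>(\<sigma>_x(y)) ~ \<psi>(y) and \<psi>(\<tau>_y(x)) ~ c_{\<psi>(y)}(\<psi>(x)) for r_2, and
   \<psi>(\<tau>_y(x)) ~ \<psi>(x) for r_3.  This turns the three component identities of the braid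
   relation into identities between conjugations.  The maps r_1 and r_4 are the inverses of r_2
   and r_3, and inversion preserves both being a solution and non-degeneracy. *)

section \<open>Set-theoretic solutions\<close>

lemma r12_closed:
  "(\<And>p. p \<in> S \<times> S \<Longrightarrow> r p \<in> S \<times> S) \<Longrightarrow> t \<in> S \<times> S \<times> S \<Longrightarrow> r12 r t \<in> S \<times> S \<times> S"
  by (cases t) (auto simp: r12_def mem_Times_iff)

lemma r23_closed:
  "(\<And>p. p \<in> S \<times> S \<Longrightarrow> r p \<in> S \<times> S) \<Longrightarrow> t \<in> S \<times> S \<times> S \<Longrightarrow> r23 r t \<in> S \<times> S \<times> S"
  by (cases t) (auto simp: r23_def mem_Times_iff)

lemma r12_cancel:
  "(\<And>p. p \<in> S \<times> S \<Longrightarrow> r (r' p) = p) \<Longrightarrow> t \<in> S \<times> S \<times> S \<Longrightarrow> r12 r (r12 r' t) = t"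
  by (cases t) (auto simp: r12_def)

lemma r23_cancel:
  "(\<And>p. p \<in> S \<times> S \<Longrightarrow> r (r' p) = p) \<Longrightarrow> t \<in> S \<times> S \<times> S \<Longrightarrow> r23 r (r23 r' t) = t"
  by (cases t) (auto simp: r23_def)

lemma is_YBE_solution_of_components:
  assumes "S \<noteq> {}"
    and r: "\<And>x y. x \<in> S \<Longrightarrow> y \<in> S \<Longrightarrow> r (x, y) = (\<sigma> x y, \<tau> y x)"
    and \<sigma>_closed: "\<And>x y. x \<in> S \<Longrightarrow> y \<in> S \<Longrightarrow> \<sigma> x y \<in> S"
    and \<tau>_closed: "\<And>x y. x \<in> S \<Longrightarrow> y \<in> S \<Longrightarrow> \<tau> y x \<in> S"
    and r'_closed: "\<And>p. p \<in> S \<times> S \<Longrightarrow> r' p \<in> S \<times> S"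
    and r_r': "\<And>p. p \<in> S \<times> S \<Longrightarrow> r (r' p) = p"
    and r'_r: "\<And>p. p \<in> S \<times> S \<Longrightarrow> r' (r p) = p"
    and braid1: "\<And>x y z. x \<in> S \<Longrightarrow> y \<in> S \<Longrightarrow> z \<in> S \<Longrightarrow>
      \<sigma> (\<sigma> x y) (\<sigma> (\<tau> y x) z) = \<sigma> x (\<sigma> y z)"
    and braid2: "\<And>x y z. x \<in> S \<Longrightarrow> y \<in> S \<Longrightarrow> z \<in> S \<Longrightarrow>
      \<tau> (\<sigma> (\<tau> y x) z) (\<sigma> x y) = \<sigma> (\<tau> (\<sigma> y z) x) (\<tau> z y)"
    and braid3: "\<And>x y z. x \<in> S \<Longrightarrow> y \<in> S \<Longrightarrow> z \<in> S \<Longrightarrow>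
      \<tau> z (\<tau> y x) = \<tau> (\<tau> z y) (\<tau> (\<sigma> y z) x)"
  shows "is_YBE_solution S r"
  unfolding is_YBE_solution_def
proof (intro conjI ballI)
  show "S \<noteq> {}" by fact
  have "r ` (S \<times> S) \<subseteq> S \<times> S" using r \<sigma>_closed \<tau>_closed by auto
  moreover have "r' ` (S \<times> S) \<subseteq> S \<times> S" using r'_closed by blast
  ultimately show "bij_betw r (Sigma S (\<lambda>_. S)) (Sigma S (\<lambda>_. S))"
    by (intro bij_betw_byWitness[where f' = r']) (use r_r' r'_r in auto)
  fix x y z assume xyz: "x \<in> S" "y \<in> S" "z \<in> S"
  have "r12 r (r23 r (r12 r (x, y, z))) =
      (\<sigma> (\<sigma> x y) (\<sigma> (\<tau> y x) z), \<tau> (\<sigma> (\<tau> y x) z) (\<sigma> x y), \<tau> z (\<tau> y x))"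
    using xyz by (simp add: r12_def r23_def r \<sigma>_closed \<tau>_closed)
  moreover have "r23 r (r12 r (r23 r (x, y, z))) =
      (\<sigma> x (\<sigma> y z), \<sigma> (\<tau> (\<sigma> y z) x) (\<tau> z y), \<tau> (\<tau> z y) (\<tau> (\<sigma> y z) x))"
    using xyz by (simp add: r12_def r23_def r \<sigma>_closed \<tau>_closed)
  ultimately show "r12 r (r23 r (r12 r (x, y, z))) = r23 r (r12 r (r23 r (x, y, z)))"
    using braid1[OF xyz] braid2[OF xyz] braid3[OF xyz] by simp
qed

lemma is_YBE_solution_inverse:
  assumes Y: "is_YBE_solution S r"
    and r'_closed: "\<And>p. p \<in> S \<times> S \<Longrightarrow> r' p \<in> S \<times> S"
    and r_r': "\<And>p. p \<in> S \<times> S \<Longrightarrow> r (r' p) = p"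
    and r'_r: "\<And>p. p \<in> S \<times> S \<Longrightarrow> r' (r p) = p"
  shows "is_YBE_solution S r'"
  unfolding is_YBE_solution_def
proof (intro conjI ballI)
  have bij: "bij_betw r (S \<times> S) (S \<times> S)"
    and braid: "\<And>x y z. x \<in> S \<Longrightarrow> y \<in> S \<Longrightarrow> z \<in> S \<Longrightarrow>
        r12 r (r23 r (r12 r (x, y, z))) = r23 r (r12 r (r23 r (x, y, z)))"
    using Y by (auto simp: is_YBE_solution_def)
  show "S \<noteq> {}" using Y by (simp add: is_YBE_solution_def)
  have r_closed: "\<And>p. p \<in> S \<times> S \<Longrightarrow> r p \<in> S \<times> S" using bij by (auto dest: bij_betwE)
  have "r ` (S \<times> S) \<subseteq> S \<times> S" "r' ` (S \<times> S) \<subseteq> S \<times> S" using r_closed r'_closed by blast+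
  then show "bij_betw r' (Sigma S (\<lambda>_. S)) (Sigma S (\<lambda>_. S))"
    by (intro bij_betw_byWitness[where f' = r]) (use r_r' r'_r in auto)
  fix x y z assume "x \<in> S" "y \<in> S" "z \<in> S"
  then have t: "(x, y, z) \<in> S \<times> S \<times> S" by simp
  \<comment> \<open>Undo the right-hand side for \<open>r'\<close> by \<open>r\<close>, apply the braid relation for \<open>r\<close>,
    then undo its left-hand side by \<open>r'\<close>.\<close>
  define u where "u = r23 r' (x, y, z)"
  define v where "v = r12 r' u"
  define s where "s = r23 r' v"
  have u: "u \<in> S \<times> S \<times> S" unfolding u_def by (rule r23_closed[OF r'_closed t])
  have v: "v \<in> S \<times> S \<times> S" unfolding v_def by (rule r12_closed[OF r'_closed u])
  have s: "s \<in> S \<times> S \<times> S" unfolding s_def by (rule r23_closed[OF r'_closed v])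
  have "r12 r (r23 r (r12 r s)) = r23 r (r12 r (r23 r s))"
    using s braid by (cases s) auto
  also have "\<dots> = (x, y, z)"
    using r23_cancel[where r = r and r' = r', OF r_r' v] r12_cancel[where r = r and r' = r', OF r_r' u]
      r23_cancel[where r = r and r' = r', OF r_r' t]
    by (simp add: s_def v_def u_def)
  finally have "r12 r' (r23 r' (r12 r' (x, y, z))) = r12 r' (r23 r' (r12 r' (r12 r (r23 r (r12 r s)))))"
    by simp
  also have "\<dots> = s"
    using s by (simp add: r12_closed[OF r_closed] r23_closed[OF r_closed]
        r12_cancel[where r = r' and r' = r, OF r'_r] r23_cancel[where r = r' and r' = r, OF r'_r])
  finally show "r12 r' (r23 r' (r12 r' (x, y, z))) = r23 r' (r12 r' (r23 r' (x, y, z)))"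
    by (simp add: s_def v_def u_def)
qed

definition transpose_map :: "('a \<times> 'a \<Rightarrow> 'a \<times> 'a) \<Rightarrow> 'a \<times> 'a \<Rightarrow> 'a \<times> 'a" where
  "transpose_map r p = prod.swap (r (prod.swap p))"

lemma nondegenerate_iff_transpose_map:
  "nondegenerate S r \<longleftrightarrow>
     (\<forall>x\<in>S. bij_betw (\<lambda>y. fst (r (x, y))) S S) \<and>
     (\<forall>x\<in>S. bij_betw (\<lambda>y. fst (transpose_map r (x, y))) S S)"
  by (auto simp: nondegenerate_def transpose_map_def)

lemma bij_betw_fst_inverse:
  assumes r_closed: "\<And>p. p \<in> S \<times> S \<Longrightarrow> r p \<in> S \<times> S"
    and r'_closed: "\<And>p. p \<in> S \<times> S \<Longrightarrow> r' p \<in> S \<times> S"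
    and r_r': "\<And>p. p \<in> S \<times> S \<Longrightarrow> r (r' p) = p"
    and r'_r: "\<And>p. p \<in> S \<times> S \<Longrightarrow> r' (r p) = p"
    and bij: "\<And>x. x \<in> S \<Longrightarrow> bij_betw (\<lambda>y. fst (r (x, y))) S S"
    and u: "u \<in> S"
  shows "bij_betw (\<lambda>v. fst (r' (u, v))) S S"
  unfolding bij_betw_def
proof (intro conjI subset_antisym)
  show "inj_on (\<lambda>v. fst (r' (u, v))) S"
  proof (rule inj_onI)
    fix v1 v2 assume v: "v1 \<in> S" "v2 \<in> S" and eq: "fst (r' (u, v1)) = fst (r' (u, v2))"
    obtain g h1 where p1: "r' (u, v1) = (g, h1)" by (cases "r' (u, v1)")
    obtain h2 where p2: "r' (u, v2) = (g, h2)" using eq p1 by (cases "r' (u, v2)") simp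
    have S: "g \<in> S" "h1 \<in> S" "h2 \<in> S"
      using r'_closed[of "(u, v1)"] r'_closed[of "(u, v2)"] p1 p2 u v by auto
    have r1: "r (g, h1) = (u, v1)" and r2: "r (g, h2) = (u, v2)"
      using r_r'[of "(u, v1)"] r_r'[of "(u, v2)"] p1 p2 u v by auto
    have "h1 = h2"
      using inj_onD[OF bij_betw_imp_inj_on[OF bij[OF S(1)]] _ S(2,3)] r1 r2 by simp
    then show "v1 = v2" using r1 r2 by simp
  qed
  show "(\<lambda>v. fst (r' (u, v))) ` S \<subseteq> S" using r'_closed u by (auto simp: mem_Times_iff)
  show "S \<subseteq> (\<lambda>v. fst (r' (u, v))) ` S"
  proof
    fix g assume g: "g \<in> S"
    obtain h where h: "h \<in> S" "fst (r (g, h)) = u"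
      using u bij_betw_imp_surj_on[OF bij[OF g]] by force
    define v where "v = snd (r (g, h))"
    have "r' (u, v) = (g, h)" using r'_r[of "(g, h)"] g h by (simp add: v_def flip: h(2))
    moreover have "v \<in> S" using r_closed[of "(g, h)"] g h by (auto simp: v_def mem_Times_iff)
    ultimately show "g \<in> (\<lambda>v. fst (r' (u, v))) ` S" by force
  qed
qed

lemma nondegenerate_inverse:
  assumes nondeg: "nondegenerate S r"
    and r_closed: "\<And>p. p \<in> S \<times> S \<Longrightarrow> r p \<in> S \<times> S"
    and r'_closed: "\<And>p. p \<in> S \<times> S \<Longrightarrow> r' p \<in> S \<times> S"
    and r_r': "\<And>p. p \<in> S \<times> S \<Longrightarrow> r (r' p) = p"
    and r'_r: "\<And>p. p \<in> S \<times> S \<Longrightarrow> r' (r p) = p"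
  shows "nondegenerate S r'"
proof -
  have t_closed: "\<And>p. p \<in> S \<times> S \<Longrightarrow> transpose_map r p \<in> S \<times> S"
    and t'_closed: "\<And>p. p \<in> S \<times> S \<Longrightarrow> transpose_map r' p \<in> S \<times> S"
    using r_closed r'_closed by (force simp: transpose_map_def)+
  have t_t': "\<And>p. p \<in> S \<times> S \<Longrightarrow> transpose_map r (transpose_map r' p) = p"
    and t'_t: "\<And>p. p \<in> S \<times> S \<Longrightarrow> transpose_map r' (transpose_map r p) = p"
    using r_r' r'_r by (force simp: transpose_map_def)+
  show ?thesis
    using nondeg unfolding nondegenerate_iff_transpose_map
    by (blast intro: bij_betw_fst_inverse[OF r_closed r'_closed r_r' r'_r]
        bij_betw_fst_inverse[OF t_closed t'_closed t_t' t'_t])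
qed

section \<open>Conjugation and congruence modulo the centre\<close>

definition conjg :: "('a, 'b) monoid_scheme \<Rightarrow> 'a \<Rightarrow> 'a \<Rightarrow> 'a" where
  "conjg G t k = t \<otimes>\<^bsub>G\<^esub> k \<otimes>\<^bsub>G\<^esub> inv\<^bsub>G\<^esub> t"

definition center_cong :: "('a, 'b) monoid_scheme \<Rightarrow> 'a \<Rightarrow> 'a \<Rightarrow> bool" where
  "center_cong G x y \<longleftrightarrow>
     x \<in> carrier G \<and> y \<in> carrier G \<and> x \<otimes>\<^bsub>G\<^esub> inv\<^bsub>G\<^esub> y \<in> group_center G"

context group
begin

lemma inv_cancel_l [simp]: "x \<in> carrier G \<Longrightarrow> y \<in> carrier G \<Longrightarrow> inv x \<otimes> (x \<otimes> y) = y"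
  by (simp add: m_assoc [symmetric])

lemma inv_cancel_r [simp]: "x \<in> carrier G \<Longrightarrow> y \<in> carrier G \<Longrightarrow> x \<otimes> (inv x \<otimes> y) = y"
  by (simp add: m_assoc [symmetric])

lemmas group_simps = m_assoc inv_mult_group

lemma group_center_closed: "c \<in> group_center G \<Longrightarrow> c \<in> carrier G"
  by (simp add: group_center_def)

lemma group_center_commute: "c \<in> group_center G \<Longrightarrow> x \<in> carrier G \<Longrightarrow> c \<otimes> x = x \<otimes> c"
  by (simp add: group_center_def)

lemma one_in_group_center: "\<one> \<in> group_center G"
  by (simp add: group_center_def)

lemma group_center_left_commute:
  assumes c: "c \<in> group_center G" and "x \<in> carrier G" "y \<in> carrier G"
  shows "x \<otimes> (c \<otimes> y) = c \<otimes> (x \<otimes> y)"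
  using assms group_center_commute[OF c assms(2)] group_center_closed[OF c] by (simp flip: m_assoc)

lemma group_center_mult:
  assumes c: "c \<in> group_center G" and d: "d \<in> group_center G"
  shows "c \<otimes> d \<in> group_center G"
proof -
  have G: "c \<in> carrier G" "d \<in> carrier G" using c d by (auto simp: group_center_closed)
  have "c \<otimes> d \<otimes> x = x \<otimes> (c \<otimes> d)" if x: "x \<in> carrier G" for x
    using G x group_center_left_commute[OF c x G(2)] group_center_commute[OF d x]
    by (simp add: m_assoc)
  then show ?thesis using G by (simp add: group_center_def)
qed

lemma group_center_inv:
  assumes c: "c \<in> group_center G"
  shows "inv c \<in> group_center G"
proof -
  have cG: "c \<in> carrier G" using c by (rule group_center_closed)
  have "inv c \<otimes> x = x \<otimes> inv c" if x: "x \<in> carrier G" for x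
  proof -
    have "inv c \<otimes> (c \<otimes> x) \<otimes> inv c = inv c \<otimes> (x \<otimes> c) \<otimes> inv c"
      using group_center_commute[OF c x] by simp
    then show ?thesis using cG x by (simp add: m_assoc)
  qed
  then show ?thesis using cG by (simp add: group_center_def)
qed

lemma conjg_closed [simp]: "t \<in> carrier G \<Longrightarrow> k \<in> carrier G \<Longrightarrow> conjg G t k \<in> carrier G"
  by (simp add: conjg_def)

lemma conjg_mult: "s \<in> carrier G \<Longrightarrow> t \<in> carrier G \<Longrightarrow> k \<in> carrier G \<Longrightarrow>
    conjg G (s \<otimes> t) k = conjg G s (conjg G t k)"
  by (simp add: conjg_def group_simps)

lemma conjg_hom: "t \<in> carrier G \<Longrightarrow> x \<in> carrier G \<Longrightarrow> y \<in> carrier G \<Longrightarrow>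
    conjg G t (x \<otimes> y) = conjg G t x \<otimes> conjg G t y"
  by (simp add: conjg_def group_simps)

lemma conjg_inv: "t \<in> carrier G \<Longrightarrow> x \<in> carrier G \<Longrightarrow> conjg G t (inv x) = inv (conjg G t x)"
  by (simp add: conjg_def group_simps)

lemma conjg_inv_conjg [simp]: "t \<in> carrier G \<Longrightarrow> k \<in> carrier G \<Longrightarrow> conjg G (inv t) (conjg G t k) = k"
  by (simp add: conjg_def group_simps)

lemma conjg_bij: "t \<in> carrier G \<Longrightarrow> bij_betw (conjg G t) (carrier G) (carrier G)"
  by (rule bij_betw_byWitness[where f' = "conjg G (inv t)"]) (auto simp: conjg_def group_simps)

lemma conjg_by_group_center: "c \<in> group_center G \<Longrightarrow> x \<in> carrier G \<Longrightarrow> conjg G c x = x"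
  using group_center_closed[of c] group_center_commute[of c x] by (simp add: conjg_def m_assoc)

lemma conjg_of_group_center:
  assumes c: "c \<in> group_center G" and x: "x \<in> carrier G"
  shows "conjg G x c = c"
proof -
  have "conjg G x c = c \<otimes> x \<otimes> inv x" by (simp add: conjg_def group_center_commute[OF c x])
  then show ?thesis using group_center_closed[OF c] x by (simp add: m_assoc)
qed

lemma center_cong_refl: "x \<in> carrier G \<Longrightarrow> center_cong G x x"
  by (simp add: center_cong_def one_in_group_center)

lemma center_cong_sym: "center_cong G x y \<Longrightarrow> center_cong G y x"
  using group_center_inv[of "x \<otimes> inv y"] by (auto simp: center_cong_def inv_mult_group)

lemma center_cong_mult:
  assumes xx': "center_cong G x x'" and yy': "center_cong G y y'"
  shows "center_cong G (x \<otimes> y) (x' \<otimes> y')"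
proof -
  have G: "x \<in> carrier G" "y \<in> carrier G" "x' \<in> carrier G" "y' \<in> carrier G"
    and c: "x \<otimes> inv x' \<in> group_center G" "y \<otimes> inv y' \<in> group_center G"
    using assms by (auto simp: center_cong_def)
  have "(x \<otimes> y) \<otimes> inv (x' \<otimes> y') = x \<otimes> ((y \<otimes> inv y') \<otimes> inv x')"
    using G by (simp add: group_simps)
  also have "\<dots> = (y \<otimes> inv y') \<otimes> (x \<otimes> inv x')"
    using G by (intro group_center_left_commute[OF c(2)]) simp_all
  finally show ?thesis using G c by (simp add: center_cong_def group_center_mult)
qed

lemma center_cong_inv:
  assumes "center_cong G x y"
  shows "center_cong G (inv x) (inv y)"
proof -
  have G: "x \<in> carrier G" "y \<in> carrier G" and c: "inv (x \<otimes> inv y) \<in> group_center G"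
    using assms group_center_inv by (auto simp: center_cong_def)
  have "inv x \<otimes> inv (inv y) = conjg G (inv x) (inv (x \<otimes> inv y))"
    using G by (simp add: conjg_def group_simps)
  also have "\<dots> = inv (x \<otimes> inv y)" using conjg_of_group_center[OF c] G by simp
  finally show ?thesis using G c by (simp add: center_cong_def)
qed

lemma center_cong_mult_inv: "center_cong G x y \<Longrightarrow> w \<in> carrier G \<Longrightarrow> center_cong G (w \<otimes> inv x) (w \<otimes> inv y)"
  by (rule center_cong_mult[OF center_cong_refl center_cong_inv])

lemma conjg_center_cong:
  assumes st: "center_cong G s t" and k: "k \<in> carrier G"
  shows "conjg G s k = conjg G t k"
proof -
  have G: "s \<in> carrier G" "t \<in> carrier G" and c: "s \<otimes> inv t \<in> group_center G"
    using st by (auto simp: center_cong_def)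
  have "conjg G s k = conjg G ((s \<otimes> inv t) \<otimes> t) k" using G by (simp add: group_simps)
  also have "\<dots> = conjg G t k" using G k c by (simp add: conjg_mult conjg_by_group_center)
  finally show ?thesis .
qed

lemma center_cong_mult_conjg:
  assumes a: "center_cong G a (conjg G b c)" and b: "b \<in> carrier G" and c: "c \<in> carrier G"
  shows "center_cong G (b \<otimes> c) (a \<otimes> b)"
proof -
  have "center_cong G (a \<otimes> b) (conjg G b c \<otimes> b)"
    using a b by (intro center_cong_mult center_cong_refl)
  moreover have "conjg G b c \<otimes> b = b \<otimes> c" using b c by (simp add: conjg_def group_simps)
  ultimately show ?thesis by (simp add: center_cong_sym)
qed

lemma center_cong_conjg:
  assumes pq: "center_cong G p q" and t: "t \<in> carrier G"
  shows "center_cong G (conjg G t p) (conjg G t q)"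
proof -
  have G: "p \<in> carrier G" "q \<in> carrier G" and c: "p \<otimes> inv q \<in> group_center G"
    using pq by (auto simp: center_cong_def)
  have "conjg G t p \<otimes> inv (conjg G t q) = conjg G t (p \<otimes> inv q)"
    using G t by (simp add: conjg_hom conjg_inv)
  also have "\<dots> = p \<otimes> inv q" using conjg_of_group_center[OF c t] .
  finally show ?thesis using G t c by (simp add: center_cong_def)
qed

end

section \<open>Endomorphisms with central commutators\<close>

locale YBE_endomorphism = group G for G (structure) +
  fixes \<psi> :: "'a \<Rightarrow> 'a"
  assumes \<psi>_hom: "\<psi> \<in> hom G G"
    and \<psi>_comm_central:
      "\<And>a k. a \<in> endo_comm G \<psi> \<Longrightarrow> k \<in> carrier G \<Longrightarrow> \<psi> (comm G a k) \<in> group_center G"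
begin

lemma \<psi>_closed [simp]: "x \<in> carrier G \<Longrightarrow> \<psi> x \<in> carrier G"
  using \<psi>_hom by (simp add: hom_in_carrier)

lemma \<psi>_mult [simp]: "x \<in> carrier G \<Longrightarrow> y \<in> carrier G \<Longrightarrow> \<psi> (x \<otimes> y) = \<psi> x \<otimes> \<psi> y"
  using \<psi>_hom by (simp add: hom_mult)

lemma \<psi>_inv [simp]: "x \<in> carrier G \<Longrightarrow> \<psi> (inv x) = inv (\<psi> x)"
  using group_hom.hom_inv[of G G \<psi>] \<psi>_hom by (simp add: group_hom_def group_hom_axioms_def)

definition psi_comm :: "'a \<Rightarrow> 'a" where
  "psi_comm x = x \<otimes> inv (\<psi> x)"

lemma psi_comm_closed [simp]: "x \<in> carrier G \<Longrightarrow> psi_comm x \<in> carrier G"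
  by (simp add: psi_comm_def)

lemma endo_comm_gens_subset: "{g \<otimes> inv (\<psi> g) | g. g \<in> carrier G} \<subseteq> carrier G"
  by auto

lemma endo_comm_closed: "a \<in> endo_comm G \<psi> \<Longrightarrow> a \<in> carrier G"
  using generate_incl[OF endo_comm_gens_subset] by (auto simp: endo_comm_def)

lemma psi_comm_in_endo_comm: "x \<in> carrier G \<Longrightarrow> psi_comm x \<in> endo_comm G \<psi>"
  unfolding endo_comm_def psi_comm_def by (rule generate.incl) blast

lemma endo_comm_mult: "a \<in> endo_comm G \<psi> \<Longrightarrow> b \<in> endo_comm G \<psi> \<Longrightarrow> a \<otimes> b \<in> endo_comm G \<psi>"
  unfolding endo_comm_def by (rule generate.eng)

lemma endo_comm_inv: "a \<in> endo_comm G \<psi> \<Longrightarrow> inv a \<in> endo_comm G \<psi>"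
  unfolding endo_comm_def by (rule generate_m_inv_closed[OF endo_comm_gens_subset])

lemma inv_psi_mult_in_endo_comm: "x \<in> carrier G \<Longrightarrow> inv (\<psi> x) \<otimes> x \<in> endo_comm G \<psi>"
  using endo_comm_inv[OF psi_comm_in_endo_comm[of "inv x"]] by (simp add: psi_comm_def inv_mult_group)

lemma inv_mult_psi_in_endo_comm: "x \<in> carrier G \<Longrightarrow> inv x \<otimes> \<psi> x \<in> endo_comm G \<psi>"
  using psi_comm_in_endo_comm[of "inv x"] by (simp add: psi_comm_def)

lemma psi_conjg_by_endo_comm:
  assumes a: "a \<in> endo_comm G \<psi>" and k: "k \<in> carrier G"
  shows "center_cong G (\<psi> (conjg G a k)) (\<psi> k)"
proof -
  have "\<psi> (comm G a k) = \<psi> (conjg G a k) \<otimes> inv (\<psi> k)"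
    using endo_comm_closed[OF a] k by (simp add: comm_def conjg_def group_simps)
  then show ?thesis using \<psi>_comm_central[OF a k] endo_comm_closed[OF a] k by (simp add: center_cong_def)
qed

lemma psi_conjg_of_endo_comm:
  assumes a: "a \<in> endo_comm G \<psi>" and k: "k \<in> carrier G"
  shows "center_cong G (\<psi> (conjg G k a)) (\<psi> a)"
proof -
  have "inv (\<psi> (comm G a k)) = \<psi> (conjg G k a) \<otimes> inv (\<psi> a)"
    using endo_comm_closed[OF a] k by (simp add: comm_def conjg_def group_simps)
  then show ?thesis
    using group_center_inv[OF \<psi>_comm_central[OF a k]] endo_comm_closed[OF a] k
    by (simp add: center_cong_def)
qed

lemma psi_conjg_by_psi:
  assumes z: "z \<in> carrier G" and y: "y \<in> carrier G"
  shows "center_cong G (\<psi> (conjg G (\<psi> z) y)) (conjg G (\<psi> z) (\<psi> y))"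
proof -
  \<comment> \<open>\<open>c\<^bsub>\<psi> z\<^esub> = c\<^bsub>z\<^esub> \<circ> c\<^bsub>e\<^esub>\<close> with \<open>e \<in> [G,\<psi>]\<close>, and \<open>\<psi> \<circ> c\<^bsub>z\<^esub> = c\<^bsub>\<psi> z\<^esub> \<circ> \<psi>\<close>.\<close>
  define e where "e = inv z \<otimes> \<psi> z"
  have e: "e \<in> endo_comm G \<psi>" "e \<in> carrier G"
    using inv_mult_psi_in_endo_comm[OF z] z by (auto simp: e_def)
  have "\<psi> (conjg G (\<psi> z) y) = conjg G (\<psi> z) (\<psi> (conjg G e y))"
    using z y by (simp add: conjg_def e_def group_simps)
  then show ?thesis using center_cong_conjg[OF psi_conjg_by_endo_comm[OF e(1) y]] z by simp
qed

subsection \<open>The solutions \<open>r\<^sub>3\<close> and \<open>r\<^sub>4\<close>\<close>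

definition sigma3 :: "'a \<Rightarrow> 'a \<Rightarrow> 'a" where
  "sigma3 x k = conjg G (\<psi> x) k"

definition tau3 :: "'a \<Rightarrow> 'a \<Rightarrow> 'a" where
  "tau3 y x = inv (sigma3 x y) \<otimes> x \<otimes> y"

lemma sigma3_closed [simp]: "x \<in> carrier G \<Longrightarrow> k \<in> carrier G \<Longrightarrow> sigma3 x k \<in> carrier G"
  by (simp add: sigma3_def)

lemma tau3_closed [simp]: "x \<in> carrier G \<Longrightarrow> y \<in> carrier G \<Longrightarrow> tau3 y x \<in> carrier G"
  by (simp add: tau3_def)

lemma YBE_r3_eq: "g \<in> carrier G \<Longrightarrow> h \<in> carrier G \<Longrightarrow> YBE_r3 G \<psi> (g, h) = (sigma3 g h, tau3 h g)"
  by (simp add: YBE_r3_def tau3_def sigma3_def conjg_def group_simps)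

lemma YBE_r4_eq: "g \<in> carrier G \<Longrightarrow> h \<in> carrier G \<Longrightarrow>
    YBE_r4 G \<psi> (g, h) = (g \<otimes> h \<otimes> inv (\<psi> h) \<otimes> inv g \<otimes> \<psi> h, conjg G (inv (\<psi> h)) g)"
  by (simp add: YBE_r4_def conjg_def)

lemma psi_sigma3_mult:
  assumes x: "x \<in> carrier G" and k: "k \<in> carrier G"
  shows "center_cong G (\<psi> (sigma3 x k \<otimes> x \<otimes> inv k)) (\<psi> x)"
proof -
  define b where "b = inv (\<psi> x) \<otimes> x"
  have b: "b \<in> endo_comm G \<psi>" "b \<in> carrier G"
    using inv_psi_mult_in_endo_comm[OF x] x by (auto simp: b_def)
  have "center_cong G (\<psi> (\<psi> x) \<otimes> \<psi> (conjg G k b)) (\<psi> (\<psi> x) \<otimes> \<psi> b)"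
    using x by (intro center_cong_mult center_cong_refl psi_conjg_of_endo_comm b(1) k) simp
  moreover have "\<psi> (sigma3 x k \<otimes> x \<otimes> inv k) = \<psi> (\<psi> x) \<otimes> \<psi> (conjg G k b)"
    using x k by (simp add: b_def sigma3_def conjg_def group_simps)
  moreover have "\<psi> (\<psi> x) \<otimes> \<psi> b = \<psi> x" using x by (simp add: b_def group_simps)
  ultimately show ?thesis by simp
qed

lemma psi_tau3: "x \<in> carrier G \<Longrightarrow> y \<in> carrier G \<Longrightarrow> center_cong G (\<psi> (tau3 y x)) (\<psi> x)"
  using psi_sigma3_mult[of x "inv y"] by (simp add: tau3_def sigma3_def conjg_inv)

lemma sigma3_tau3: "x \<in> carrier G \<Longrightarrow> y \<in> carrier G \<Longrightarrow> k \<in> carrier G \<Longrightarrow> sigma3 (tau3 y x) k = sigma3 x k"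
  unfolding sigma3_def by (rule conjg_center_cong[OF psi_tau3])

lemma sigma3_sigma3: "x \<in> carrier G \<Longrightarrow> y \<in> carrier G \<Longrightarrow> k \<in> carrier G \<Longrightarrow>
    sigma3 x (sigma3 y k) = sigma3 (x \<otimes> y) k"
  by (simp add: sigma3_def conjg_mult)

lemma sigma3_mult_tau3: "x \<in> carrier G \<Longrightarrow> y \<in> carrier G \<Longrightarrow> sigma3 x y \<otimes> tau3 y x = x \<otimes> y"
  by (simp add: tau3_def group_simps)

lemma sigma3_self_distrib:
  assumes x: "x \<in> carrier G" and y: "y \<in> carrier G" and z: "z \<in> carrier G"
  shows "sigma3 (sigma3 x y) (sigma3 x z) = sigma3 x (sigma3 y z)"
proof -
  have "sigma3 (sigma3 x y) (sigma3 x z) = sigma3 (sigma3 x y) (sigma3 (tau3 y x) z)"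
    using assms by (simp add: sigma3_tau3)
  also have "\<dots> = sigma3 (sigma3 x y \<otimes> tau3 y x) z" using assms by (simp add: sigma3_sigma3)
  also have "\<dots> = sigma3 x (sigma3 y z)" using assms by (simp add: sigma3_mult_tau3 sigma3_sigma3)
  finally show ?thesis .
qed

lemma sigma3_tau3_tau3:
  assumes x: "x \<in> carrier G" and y: "y \<in> carrier G" and z: "z \<in> carrier G"
  shows "sigma3 (tau3 (sigma3 y z) x) (tau3 z y) = inv (sigma3 x (sigma3 y z)) \<otimes> sigma3 x y \<otimes> sigma3 x z"
  using assms by (simp add: sigma3_tau3) (simp add: tau3_def sigma3_def conjg_hom conjg_inv)

lemma YBE_r3_braid2:
  assumes x: "x \<in> carrier G" and y: "y \<in> carrier G" and z: "z \<in> carrier G"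
  shows "tau3 (sigma3 (tau3 y x) z) (sigma3 x y) = sigma3 (tau3 (sigma3 y z) x) (tau3 z y)"
proof -
  have "tau3 (sigma3 (tau3 y x) z) (sigma3 x y) =
      inv (sigma3 (sigma3 x y) (sigma3 x z)) \<otimes> sigma3 x y \<otimes> sigma3 x z"
    using assms by (simp add: sigma3_tau3) (simp add: tau3_def)
  also have "\<dots> = sigma3 (tau3 (sigma3 y z) x) (tau3 z y)"
    using assms by (simp add: sigma3_self_distrib sigma3_tau3_tau3)
  finally show ?thesis .
qed

lemma YBE_r3_braid3:
  assumes x: "x \<in> carrier G" and y: "y \<in> carrier G" and z: "z \<in> carrier G"
  shows "tau3 z (tau3 y x) = tau3 (tau3 z y) (tau3 (sigma3 y z) x)"
proof -
  have "tau3 z (tau3 y x) = inv (sigma3 x z) \<otimes> (inv (sigma3 x y) \<otimes> x \<otimes> y) \<otimes> z"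
    using assms by (simp add: sigma3_tau3 tau3_def[of z "tau3 y x"]) (simp add: tau3_def)
  moreover have "tau3 (tau3 z y) (tau3 (sigma3 y z) x) =
      inv (inv (sigma3 x (sigma3 y z)) \<otimes> sigma3 x y \<otimes> sigma3 x z) \<otimes>
      (inv (sigma3 x (sigma3 y z)) \<otimes> x \<otimes> sigma3 y z) \<otimes> (inv (sigma3 y z) \<otimes> y \<otimes> z)"
    using assms sigma3_tau3_tau3[OF assms]
    by (simp add: tau3_def[of "tau3 z y" "tau3 (sigma3 y z) x"]) (simp add: tau3_def)
  ultimately show ?thesis using assms by (simp add: group_simps)
qed

lemma YBE_r3_r4: "g \<in> carrier G \<Longrightarrow> h \<in> carrier G \<Longrightarrow> YBE_r3 G \<psi> (YBE_r4 G \<psi> (g, h)) = (g, h)"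
proof -
  assume g: "g \<in> carrier G" and h: "h \<in> carrier G"
  define u where "u = g \<otimes> h \<otimes> inv (\<psi> h) \<otimes> inv g \<otimes> \<psi> h"
  define v where "v = conjg G (inv (\<psi> h)) g"
  have uv: "u \<in> carrier G" "v \<in> carrier G" using g h by (auto simp: u_def v_def)
  have "\<psi> u = \<psi> (conjg G g (psi_comm h)) \<otimes> \<psi> (\<psi> h)"
    using g h by (simp add: u_def psi_comm_def conjg_def group_simps)
  moreover have "center_cong G (\<psi> (conjg G g (psi_comm h)) \<otimes> \<psi> (\<psi> h)) (\<psi> (psi_comm h) \<otimes> \<psi> (\<psi> h))"
    using g h
    by (intro center_cong_mult center_cong_refl psi_conjg_of_endo_comm psi_comm_in_endo_comm) simp_all
  ultimately have "center_cong G (\<psi> u) (\<psi> h)" using h by (simp add: psi_comm_def group_simps)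
  then have "sigma3 u v = g"
    using conjg_center_cong[of "\<psi> u" "\<psi> h" v] uv g h
    by (simp add: sigma3_def v_def conjg_def group_simps)
  moreover have "YBE_r3 G \<psi> (YBE_r4 G \<psi> (g, h)) = (sigma3 u v, tau3 v u)"
    using g h uv by (simp add: YBE_r4_eq YBE_r3_eq u_def v_def)
  ultimately show ?thesis using g h by (simp add: tau3_def u_def v_def conjg_def group_simps)
qed

lemma YBE_r4_r3: "g \<in> carrier G \<Longrightarrow> h \<in> carrier G \<Longrightarrow> YBE_r4 G \<psi> (YBE_r3 G \<psi> (g, h)) = (g, h)"
proof -
  assume g: "g \<in> carrier G" and h: "h \<in> carrier G"
  define u where "u = sigma3 g h"
  define v where "v = tau3 h g"
  have uv: "u \<in> carrier G" "v \<in> carrier G" using g h by (auto simp: u_def v_def)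
  have "center_cong G (inv (\<psi> v)) (inv (\<psi> g))"
    using center_cong_inv[OF psi_tau3[OF g h]] by (simp add: v_def)
  then have c: "conjg G (inv (\<psi> v)) u = h"
    using conjg_center_cong[OF _ uv(1)] g h by (simp add: u_def sigma3_def conjg_def group_simps)
  have "u \<otimes> v \<otimes> inv (\<psi> v) \<otimes> inv u \<otimes> \<psi> v = (u \<otimes> v) \<otimes> inv (conjg G (inv (\<psi> v)) u)"
    using uv by (simp add: conjg_def group_simps)
  also have "\<dots> = g" using c sigma3_mult_tau3[OF g h] g h by (simp add: u_def v_def group_simps)
  finally show ?thesis using c g h uv by (simp add: YBE_r4_eq YBE_r3_eq u_def v_def)
qed

lemma YBE_r3_closed: "p \<in> carrier G \<times> carrier G \<Longrightarrow> YBE_r3 G \<psi> p \<in> carrier G \<times> carrier G"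
  by (cases p) (simp add: YBE_r3_eq)

lemma YBE_r4_closed: "p \<in> carrier G \<times> carrier G \<Longrightarrow> YBE_r4 G \<psi> p \<in> carrier G \<times> carrier G"
  by (cases p) (simp add: YBE_r4_eq)

lemma YBE_r3_solution: "is_YBE_solution (carrier G) (YBE_r3 G \<psi>)"
proof (rule is_YBE_solution_of_components[where \<sigma> = sigma3 and \<tau> = tau3 and r' = "YBE_r4 G \<psi>"])
  fix p assume "p \<in> carrier G \<times> carrier G"
  then show "YBE_r4 G \<psi> p \<in> carrier G \<times> carrier G" "YBE_r3 G \<psi> (YBE_r4 G \<psi> p) = p"
    "YBE_r4 G \<psi> (YBE_r3 G \<psi> p) = p"
    by (auto simp: YBE_r4_closed YBE_r3_r4 YBE_r4_r3)
next
  fix x y z assume xyz: "x \<in> carrier G" "y \<in> carrier G" "z \<in> carrier G"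
  then show "sigma3 (sigma3 x y) (sigma3 (tau3 y x) z) = sigma3 x (sigma3 y z)"
    by (simp add: sigma3_tau3 sigma3_self_distrib)
  show "tau3 (sigma3 (tau3 y x) z) (sigma3 x y) = sigma3 (tau3 (sigma3 y z) x) (tau3 z y)"
    using xyz by (rule YBE_r3_braid2)
  show "tau3 z (tau3 y x) = tau3 (tau3 z y) (tau3 (sigma3 y z) x)"
    using xyz by (rule YBE_r3_braid3)
qed (use one_closed in \<open>auto simp: YBE_r3_eq\<close>)

lemma bij_betw_tau3: "x \<in> carrier G \<Longrightarrow> bij_betw (tau3 x) (carrier G) (carrier G)"
proof (rule bij_betw_byWitness[where f' = "\<lambda>t. sigma3 t x \<otimes> t \<otimes> inv x"])
  assume x: "x \<in> carrier G"
  show "\<forall>g\<in>carrier G. sigma3 (tau3 x g) x \<otimes> tau3 x g \<otimes> inv x = g"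
    using x by (simp add: sigma3_tau3) (simp add: tau3_def group_simps)
  show "\<forall>t\<in>carrier G. tau3 x (sigma3 t x \<otimes> t \<otimes> inv x) = t"
  proof
    fix t assume t: "t \<in> carrier G"
    have "center_cong G (\<psi> (sigma3 t x \<otimes> t \<otimes> inv x)) (\<psi> t)"
      using psi_sigma3_mult[OF t x] .
    then have "sigma3 (sigma3 t x \<otimes> t \<otimes> inv x) x = sigma3 t x"
      using x by (simp add: sigma3_def conjg_center_cong)
    then show "tau3 x (sigma3 t x \<otimes> t \<otimes> inv x) = t" using x t by (simp add: tau3_def group_simps)
  qed
  show "tau3 x ` carrier G \<subseteq> carrier G" "(\<lambda>t. sigma3 t x \<otimes> t \<otimes> inv x) ` carrier G \<subseteq> carrier G"
    using x by auto
qed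

lemma YBE_r3_nondegenerate: "nondegenerate (carrier G) (YBE_r3 G \<psi>)"
  unfolding nondegenerate_def
proof (intro ballI conjI)
  fix x assume x: "x \<in> carrier G"
  show "bij_betw (\<lambda>y. fst (YBE_r3 G \<psi> (x, y))) (carrier G) (carrier G)"
    using conjg_bij[OF \<psi>_closed[OF x]]
    by (rule bij_betw_cong[THEN iffD2, rotated]) (simp add: x YBE_r3_eq sigma3_def)
  show "bij_betw (\<lambda>y. snd (YBE_r3 G \<psi> (y, x))) (carrier G) (carrier G)"
    using bij_betw_tau3[OF x]
    by (rule bij_betw_cong[THEN iffD2, rotated]) (simp add: x YBE_r3_eq)
qed

subsection \<open>The solutions \<open>r\<^sub>2\<close> and \<open>r\<^sub>1\<close>\<close>

definition sigma2 :: "'a \<Rightarrow> 'a \<Rightarrow> 'a" where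
  "sigma2 x k = conjg G (psi_comm x) k"

definition tau2 :: "'a \<Rightarrow> 'a \<Rightarrow> 'a" where
  "tau2 y x = conjg G (\<psi> y) x"

lemma sigma2_closed [simp]: "x \<in> carrier G \<Longrightarrow> k \<in> carrier G \<Longrightarrow> sigma2 x k \<in> carrier G"
  by (simp add: sigma2_def)

lemma tau2_closed [simp]: "x \<in> carrier G \<Longrightarrow> y \<in> carrier G \<Longrightarrow> tau2 y x \<in> carrier G"
  by (simp add: tau2_def)

lemma YBE_r2_eq: "g \<in> carrier G \<Longrightarrow> h \<in> carrier G \<Longrightarrow> YBE_r2 G \<psi> (g, h) = (sigma2 g h, tau2 h g)"
  by (simp add: YBE_r2_def sigma2_def tau2_def psi_comm_def conjg_def group_simps)

definition tau1_conj :: "'a \<Rightarrow> 'a \<Rightarrow> 'a" where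
  "tau1_conj g h = conjg G (inv (\<psi> g)) (inv (psi_comm h))"

lemma tau1_conj_closed [simp]: "g \<in> carrier G \<Longrightarrow> h \<in> carrier G \<Longrightarrow> tau1_conj g h \<in> carrier G"
  by (simp add: tau1_conj_def)

lemma YBE_r1_eq: "g \<in> carrier G \<Longrightarrow> h \<in> carrier G \<Longrightarrow>
    YBE_r1 G \<psi> (g, h) = (conjg G (inv (\<psi> g)) h, conjg G (tau1_conj g h) g)"
  by (simp add: YBE_r1_def tau1_conj_def psi_comm_def conjg_def group_simps)

lemma psi_sigma2: "x \<in> carrier G \<Longrightarrow> y \<in> carrier G \<Longrightarrow> center_cong G (\<psi> (sigma2 x y)) (\<psi> y)"
  unfolding sigma2_def by (rule psi_conjg_by_endo_comm[OF psi_comm_in_endo_comm])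

lemma tau2_sigma2: "x \<in> carrier G \<Longrightarrow> y \<in> carrier G \<Longrightarrow> k \<in> carrier G \<Longrightarrow> tau2 (sigma2 x y) k = tau2 y k"
  unfolding tau2_def by (rule conjg_center_cong[OF psi_sigma2])

lemma psi_tau2: "z \<in> carrier G \<Longrightarrow> y \<in> carrier G \<Longrightarrow> center_cong G (\<psi> (tau2 z y)) (conjg G (\<psi> z) (\<psi> y))"
  unfolding tau2_def by (rule psi_conjg_by_psi)

lemma psi_comm_tau2:
  assumes x: "x \<in> carrier G" and z: "z \<in> carrier G"
  shows "center_cong G (psi_comm (tau2 z x)) (conjg G (\<psi> z) (psi_comm x))"
proof -
  have "center_cong G (tau2 z x \<otimes> inv (\<psi> (tau2 z x))) (tau2 z x \<otimes> inv (conjg G (\<psi> z) (\<psi> x)))"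
    using x z by (intro center_cong_mult_inv psi_tau2) simp_all
  moreover have "tau2 z x \<otimes> inv (conjg G (\<psi> z) (\<psi> x)) = conjg G (\<psi> z) (psi_comm x)"
    using x z by (simp add: tau2_def psi_comm_def conjg_def group_simps)
  ultimately show ?thesis by (simp add: psi_comm_def)
qed

lemma YBE_r2_braid1:
  assumes x: "x \<in> carrier G" and y: "y \<in> carrier G" and z: "z \<in> carrier G"
  shows "sigma2 (sigma2 x y) (sigma2 (tau2 y x) z) = sigma2 x (sigma2 y z)"
proof -
  have "center_cong G (psi_comm (sigma2 x y)) (sigma2 x y \<otimes> inv (\<psi> y))"
    unfolding psi_comm_def[of "sigma2 x y"] using x y by (intro center_cong_mult_inv psi_sigma2) simp_all
  then have "center_cong G (psi_comm (sigma2 x y) \<otimes> psi_comm (tau2 y x))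
      ((sigma2 x y \<otimes> inv (\<psi> y)) \<otimes> conjg G (\<psi> y) (psi_comm x))"
    using x y by (intro center_cong_mult psi_comm_tau2)
  moreover have "(sigma2 x y \<otimes> inv (\<psi> y)) \<otimes> conjg G (\<psi> y) (psi_comm x) = psi_comm x \<otimes> psi_comm y"
    using x y by (simp add: sigma2_def psi_comm_def conjg_def group_simps)
  ultimately have cong:
      "center_cong G (psi_comm (sigma2 x y) \<otimes> psi_comm (tau2 y x)) (psi_comm x \<otimes> psi_comm y)"
    by simp
  have "sigma2 (sigma2 x y) (sigma2 (tau2 y x) z) =
      conjg G (psi_comm (sigma2 x y) \<otimes> psi_comm (tau2 y x)) z"
    using assms by (simp add: sigma2_def conjg_mult)
  also have "\<dots> = conjg G (psi_comm x \<otimes> psi_comm y) z" using cong z by (rule conjg_center_cong)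
  also have "\<dots> = sigma2 x (sigma2 y z)" using assms by (simp add: sigma2_def conjg_mult)
  finally show ?thesis .
qed

lemma YBE_r2_braid2:
  assumes x: "x \<in> carrier G" and y: "y \<in> carrier G" and z: "z \<in> carrier G"
  shows "tau2 (sigma2 (tau2 y x) z) (sigma2 x y) = sigma2 (tau2 (sigma2 y z) x) (tau2 z y)"
proof -
  have cong: "center_cong G (\<psi> z \<otimes> psi_comm x) (psi_comm (tau2 z x) \<otimes> \<psi> z)"
    using x z by (intro center_cong_mult_conjg psi_comm_tau2) simp_all
  have "tau2 (sigma2 (tau2 y x) z) (sigma2 x y) = conjg G (\<psi> z \<otimes> psi_comm x) y"
    using assms by (simp add: tau2_sigma2) (simp add: tau2_def sigma2_def conjg_mult)
  also have "\<dots> = conjg G (psi_comm (tau2 z x) \<otimes> \<psi> z) y" using cong y by (rule conjg_center_cong)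
  also have "\<dots> = sigma2 (tau2 (sigma2 y z) x) (tau2 z y)"
    using assms by (simp add: tau2_sigma2) (simp add: tau2_def sigma2_def conjg_mult)
  finally show ?thesis .
qed

lemma YBE_r2_braid3:
  assumes x: "x \<in> carrier G" and y: "y \<in> carrier G" and z: "z \<in> carrier G"
  shows "tau2 z (tau2 y x) = tau2 (tau2 z y) (tau2 (sigma2 y z) x)"
proof -
  have cong: "center_cong G (\<psi> z \<otimes> \<psi> y) (\<psi> (tau2 z y) \<otimes> \<psi> z)"
    using y z by (intro center_cong_mult_conjg psi_tau2) simp_all
  have "tau2 z (tau2 y x) = conjg G (\<psi> z \<otimes> \<psi> y) x" using assms by (simp add: tau2_def conjg_mult)
  also have "\<dots> = conjg G (\<psi> (tau2 z y) \<otimes> \<psi> z) x" using cong x by (rule conjg_center_cong)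
  also have "\<dots> = tau2 (tau2 z y) (tau2 (sigma2 y z) x)"
    using assms
    by (simp add: tau2_sigma2) (simp add: tau2_def[of z x] tau2_def[of "tau2 z y"] conjg_mult)
  finally show ?thesis .
qed

lemma YBE_r1_r2: "g \<in> carrier G \<Longrightarrow> h \<in> carrier G \<Longrightarrow> YBE_r1 G \<psi> (YBE_r2 G \<psi> (g, h)) = (g, h)"
proof -
  assume g: "g \<in> carrier G" and h: "h \<in> carrier G"
  define u where "u = sigma2 g h"
  define v where "v = tau2 h g"
  have uv: "u \<in> carrier G" "v \<in> carrier G" using g h by (auto simp: u_def v_def)
  have cong_u: "center_cong G (inv (\<psi> u)) (inv (\<psi> h))"
    using center_cong_inv[OF psi_sigma2[OF g h]] by (simp add: u_def)
  have fst: "conjg G (inv (\<psi> u)) v = g"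
    using conjg_center_cong[OF cong_u uv(2)] g h by (simp add: v_def tau2_def)
  have "center_cong G (inv (psi_comm v)) (conjg G (\<psi> h) (inv (psi_comm g)))"
    using center_cong_inv[OF psi_comm_tau2[OF g h]] g h by (simp add: v_def conjg_inv)
  from center_cong_conjg[OF this, of "inv (\<psi> h)"]
  have "center_cong G (conjg G (inv (\<psi> h)) (inv (psi_comm v))) (inv (psi_comm g))"
    using g h by simp
  moreover have "tau1_conj u v = conjg G (inv (\<psi> h)) (inv (psi_comm v))"
    using conjg_center_cong[OF cong_u] uv by (simp add: tau1_conj_def)
  ultimately have "center_cong G (tau1_conj u v) (inv (psi_comm g))" by simp
  then have snd: "conjg G (tau1_conj u v) u = h"
    using conjg_center_cong[OF _ uv(1)] g h by (simp add: u_def sigma2_def conjg_def group_simps)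
  show ?thesis using fst snd g h uv by (simp add: YBE_r2_eq YBE_r1_eq u_def v_def)
qed

lemma tau1_conj_in_endo_comm:
  assumes g: "g \<in> carrier G" and h: "h \<in> carrier G"
  shows "tau1_conj g h \<in> endo_comm G \<psi>"
proof -
  have "tau1_conj g h = inv (psi_comm (inv g \<otimes> h)) \<otimes> (inv g \<otimes> \<psi> g)"
    using g h by (simp add: tau1_conj_def psi_comm_def conjg_def group_simps)
  then show ?thesis
    using g h by (simp add: endo_comm_mult endo_comm_inv psi_comm_in_endo_comm inv_mult_psi_in_endo_comm)
qed

lemma YBE_r2_r1: "g \<in> carrier G \<Longrightarrow> h \<in> carrier G \<Longrightarrow> YBE_r2 G \<psi> (YBE_r1 G \<psi> (g, h)) = (g, h)"
proof -
  assume g: "g \<in> carrier G" and h: "h \<in> carrier G"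
  define u where "u = conjg G (inv (\<psi> g)) h"
  define v where "v = conjg G (tau1_conj g h) g"
  have uv: "u \<in> carrier G" "v \<in> carrier G" using g h by (auto simp: u_def v_def)
  have "center_cong G (\<psi> v) (\<psi> g)"
    unfolding v_def using g h by (intro psi_conjg_by_endo_comm tau1_conj_in_endo_comm)
  then have snd: "tau2 v u = h"
    using conjg_center_cong[OF _ uv(1)] g h by (simp add: tau2_def u_def conjg_def group_simps)
  \<comment> \<open>The product below is a conjugate of \<open>\<psi>([[g,\<psi>], h\<inverse>])\<close>, hence central.\<close>
  have "psi_comm u \<otimes> tau1_conj g h = conjg G (inv (\<psi> g) \<otimes> h) (\<psi> (comm G (psi_comm g) (inv h)))"
    using g h by (simp add: u_def psi_comm_def tau1_conj_def conjg_def comm_def group_simps)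
  also have "\<dots> = \<psi> (comm G (psi_comm g) (inv h))"
    using g h by (intro conjg_of_group_center \<psi>_comm_central psi_comm_in_endo_comm) simp_all
  finally have central: "psi_comm u \<otimes> tau1_conj g h \<in> group_center G"
    using g h by (simp add: \<psi>_comm_central psi_comm_in_endo_comm)
  have fst: "sigma2 u v = g"
    using uv g h by (simp add: sigma2_def v_def conjg_mult[symmetric] conjg_by_group_center[OF central])
  show ?thesis using fst snd g h uv by (simp add: YBE_r2_eq YBE_r1_eq u_def v_def)
qed

lemma YBE_r1_closed: "p \<in> carrier G \<times> carrier G \<Longrightarrow> YBE_r1 G \<psi> p \<in> carrier G \<times> carrier G"
  by (cases p) (simp add: YBE_r1_eq)

lemma YBE_r2_closed: "p \<in> carrier G \<times> carrier G \<Longrightarrow> YBE_r2 G \<psi> p \<in> carrier G \<times> carrier G"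
  by (cases p) (simp add: YBE_r2_eq)

lemma YBE_r2_solution: "is_YBE_solution (carrier G) (YBE_r2 G \<psi>)"
proof (rule is_YBE_solution_of_components[where \<sigma> = sigma2 and \<tau> = tau2 and r' = "YBE_r1 G \<psi>"])
  fix p assume "p \<in> carrier G \<times> carrier G"
  then show "YBE_r1 G \<psi> p \<in> carrier G \<times> carrier G" "YBE_r2 G \<psi> (YBE_r1 G \<psi> p) = p"
    "YBE_r1 G \<psi> (YBE_r2 G \<psi> p) = p"
    by (auto simp: YBE_r1_closed YBE_r1_r2 YBE_r2_r1)
next
  fix x y z assume xyz: "x \<in> carrier G" "y \<in> carrier G" "z \<in> carrier G"
  show "sigma2 (sigma2 x y) (sigma2 (tau2 y x) z) = sigma2 x (sigma2 y z)"
    using xyz by (rule YBE_r2_braid1)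
  show "tau2 (sigma2 (tau2 y x) z) (sigma2 x y) = sigma2 (tau2 (sigma2 y z) x) (tau2 z y)"
    using xyz by (rule YBE_r2_braid2)
  show "tau2 z (tau2 y x) = tau2 (tau2 z y) (tau2 (sigma2 y z) x)"
    using xyz by (rule YBE_r2_braid3)
qed (use one_closed in \<open>auto simp: YBE_r2_eq\<close>)

lemma YBE_r2_nondegenerate: "nondegenerate (carrier G) (YBE_r2 G \<psi>)"
  unfolding nondegenerate_def
proof (intro ballI conjI)
  fix x assume x: "x \<in> carrier G"
  show "bij_betw (\<lambda>y. fst (YBE_r2 G \<psi> (x, y))) (carrier G) (carrier G)"
    using conjg_bij[OF psi_comm_closed[OF x]]
    by (rule bij_betw_cong[THEN iffD2, rotated]) (simp add: x YBE_r2_eq sigma2_def)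
  show "bij_betw (\<lambda>y. snd (YBE_r2 G \<psi> (y, x))) (carrier G) (carrier G)"
    using conjg_bij[OF \<psi>_closed[OF x]]
    by (rule bij_betw_cong[THEN iffD2, rotated]) (simp add: x YBE_r2_eq tau2_def)
qed

lemma YBE_r1_solution: "is_YBE_solution (carrier G) (YBE_r1 G \<psi>)"
  by (rule is_YBE_solution_inverse[OF YBE_r2_solution YBE_r1_closed]) (auto simp: YBE_r1_r2 YBE_r2_r1)

lemma YBE_r1_nondegenerate: "nondegenerate (carrier G) (YBE_r1 G \<psi>)"
  by (rule nondegenerate_inverse[OF YBE_r2_nondegenerate YBE_r2_closed YBE_r1_closed])
    (auto simp: YBE_r1_r2 YBE_r2_r1)

lemma YBE_r4_solution: "is_YBE_solution (carrier G) (YBE_r4 G \<psi>)"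
  by (rule is_YBE_solution_inverse[OF YBE_r3_solution YBE_r4_closed]) (auto simp: YBE_r3_r4 YBE_r4_r3)

lemma YBE_r4_nondegenerate: "nondegenerate (carrier G) (YBE_r4 G \<psi>)"
  by (rule nondegenerate_inverse[OF YBE_r3_nondegenerate YBE_r3_closed YBE_r4_closed])
    (auto simp: YBE_r3_r4 YBE_r4_r3)

lemma YBE_r1_eq_r2_iff_comm_group:
  "(\<forall>p \<in> carrier G \<times> carrier G. YBE_r1 G \<psi> p = YBE_r2 G \<psi> p) \<longleftrightarrow> comm_group G"
proof
  assume eq: "\<forall>p \<in> carrier G \<times> carrier G. YBE_r1 G \<psi> p = YBE_r2 G \<psi> p"
  show "comm_group G"
  proof (rule group_comm_groupI)
    fix x g assume x: "x \<in> carrier G" and g: "g \<in> carrier G"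
    \<comment> \<open>Comparing first components at \<open>(g, c\<^bsub>\<psi>(g)\<^esub>(x))\<close> gives \<open>x = c\<^bsub>g\<^esub>(x)\<close>.\<close>
    have "YBE_r1 G \<psi> (g, conjg G (\<psi> g) x) = YBE_r2 G \<psi> (g, conjg G (\<psi> g) x)"
      using eq g x by simp
    then have "x = conjg G (psi_comm g \<otimes> \<psi> g) x"
      using x g by (simp add: YBE_r1_eq YBE_r2_eq sigma2_def conjg_mult)
    then have "x \<otimes> g = (g \<otimes> x \<otimes> inv g) \<otimes> g"
      using x g by (simp add: psi_comm_def conjg_def group_simps)
    then show "x \<otimes> g = g \<otimes> x" using x g by (simp add: group_simps)
  qed
next
  assume "comm_group G"
  then interpret comm_group G .
  have "conjg G t k = k" if "t \<in> carrier G" "k \<in> carrier G" for t k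
    using that m_comm[of t k] by (simp add: conjg_def m_assoc)
  then show "\<forall>p \<in> carrier G \<times> carrier G. YBE_r1 G \<psi> p = YBE_r2 G \<psi> p"
    by (auto simp: YBE_r1_eq YBE_r2_eq sigma2_def tau2_def)
qed

lemma YBE_r3_eq_r4_at_inv_iff:
  assumes g: "g \<in> carrier G" and h: "h \<in> carrier G"
  shows "YBE_r3 G \<psi> (inv g, h) = YBE_r4 G \<psi> (inv g, h) \<longleftrightarrow>
    g \<otimes> inv (\<psi> g) \<otimes> h \<otimes> \<psi> g = h \<otimes> inv (\<psi> h) \<otimes> g \<otimes> \<psi> h"
proof -
  define A where "A = inv (\<psi> g) \<otimes> h \<otimes> \<psi> g"
  define B where "B = inv g \<otimes> h \<otimes> inv (\<psi> h) \<otimes> g \<otimes> \<psi> h"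
  \<comment> \<open>Both maps preserve the product of the two coordinates.\<close>
  have "YBE_r3 G \<psi> (inv g, h) = (A, inv A \<otimes> inv g \<otimes> h)"
    using g h by (simp add: YBE_r3_def A_def group_simps)
  moreover have "YBE_r4 G \<psi> (inv g, h) = (B, inv B \<otimes> inv g \<otimes> h)"
    using g h by (simp add: YBE_r4_def B_def group_simps)
  ultimately have "YBE_r3 G \<psi> (inv g, h) = YBE_r4 G \<psi> (inv g, h) \<longleftrightarrow> g \<otimes> A = g \<otimes> B"
    using g h by (auto simp: A_def B_def)
  also have "\<dots> \<longleftrightarrow> g \<otimes> inv (\<psi> g) \<otimes> h \<otimes> \<psi> g = h \<otimes> inv (\<psi> h) \<otimes> g \<otimes> \<psi> h"
    using g h by (simp add: A_def B_def group_simps)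
  finally show ?thesis .
qed

lemma YBE_r3_eq_r4_iff:
  "(\<forall>p \<in> carrier G \<times> carrier G. YBE_r3 G \<psi> p = YBE_r4 G \<psi> p) \<longleftrightarrow>
    (\<forall>g \<in> carrier G. \<forall>h \<in> carrier G. g \<otimes> inv (\<psi> g) \<otimes> h \<otimes> \<psi> g = h \<otimes> inv (\<psi> h) \<otimes> g \<otimes> \<psi> h)"
proof -
  have "(\<forall>p \<in> carrier G \<times> carrier G. YBE_r3 G \<psi> p = YBE_r4 G \<psi> p) \<longleftrightarrow>
      (\<forall>g \<in> carrier G. \<forall>h \<in> carrier G. YBE_r3 G \<psi> (inv g, h) = YBE_r4 G \<psi> (inv g, h))"
    by (auto simp: Ball_def)
  also have "\<dots> \<longleftrightarrow>
      (\<forall>g \<in> carrier G. \<forall>h \<in> carrier G. g \<otimes> inv (\<psi> g) \<otimes> h \<otimes> \<psi> g = h \<otimes> inv (\<psi> h) \<otimes> g \<otimes> \<psi> h)"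
    by (simp add: YBE_r3_eq_r4_at_inv_iff)
  finally show ?thesis .
qed

end

theorem mainTheorem6:
  fixes G :: "('a, 'b) monoid_scheme" and \<psi> :: "'a \<Rightarrow> 'a"
  assumes "group G"
    and "\<psi> \<in> hom G G"
    and "\<psi> ` comm_subgroup G (endo_comm G \<psi>) (carrier G) \<subseteq> group_center G"
  shows "is_YBE_solution (carrier G) (YBE_r1 G \<psi>) \<and> nondegenerate (carrier G) (YBE_r1 G \<psi>)
     \<and> is_YBE_solution (carrier G) (YBE_r2 G \<psi>) \<and> nondegenerate (carrier G) (YBE_r2 G \<psi>)
     \<and> is_YBE_solution (carrier G) (YBE_r3 G \<psi>) \<and> nondegenerate (carrier G) (YBE_r3 G \<psi>)
     \<and> is_YBE_solution (carrier G) (YBE_r4 G \<psi>) \<and> nondegenerate (carrier G) (YBE_r4 G \<psi>)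
     \<and> (\<forall>p \<in> Sigma (carrier G) (\<lambda>_. carrier G). YBE_r1 G \<psi> (YBE_r2 G \<psi> p) = p \<and> YBE_r2 G \<psi> (YBE_r1 G \<psi> p) = p)
     \<and> ((\<forall>p \<in> Sigma (carrier G) (\<lambda>_. carrier G). YBE_r1 G \<psi> p = YBE_r2 G \<psi> p) \<longleftrightarrow> comm_group G)
     \<and> (\<forall>p \<in> Sigma (carrier G) (\<lambda>_. carrier G). YBE_r3 G \<psi> (YBE_r4 G \<psi> p) = p \<and> YBE_r4 G \<psi> (YBE_r3 G \<psi> p) = p)
     \<and> ((\<forall>p \<in> Sigma (carrier G) (\<lambda>_. carrier G). YBE_r3 G \<psi> p = YBE_r4 G \<psi> p) \<longleftrightarrow>
         (\<forall>g \<in> carrier G. \<forall>h \<in> carrier G.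
            g \<otimes>\<^bsub>G\<^esub> inv\<^bsub>G\<^esub> (\<psi> g) \<otimes>\<^bsub>G\<^esub> h \<otimes>\<^bsub>G\<^esub> \<psi> g
            = h \<otimes>\<^bsub>G\<^esub> inv\<^bsub>G\<^esub> (\<psi> h) \<otimes>\<^bsub>G\<^esub> g \<otimes>\<^bsub>G\<^esub> \<psi> h))"
proof -
  have "\<psi> (comm G a k) \<in> group_center G" if "a \<in> endo_comm G \<psi>" "k \<in> carrier G" for a k
    using assms(3) that unfolding comm_subgroup_def by (blast intro: generate.incl)
  then interpret YBE_endomorphism G \<psi>
    using assms(1,2) by (simp add: YBE_endomorphism_def YBE_endomorphism_axioms_def)
  show ?thesis
    using YBE_r1_solution YBE_r1_nondegenerate YBE_r2_solution YBE_r2_nondegenerate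
      YBE_r3_solution YBE_r3_nondegenerate YBE_r4_solution YBE_r4_nondegenerate
      YBE_r1_eq_r2_iff_comm_group YBE_r3_eq_r4_iff
    by (auto simp: YBE_r1_r2 YBE_r2_r1 YBE_r3_r4 YBE_r4_r3)
qed

end
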